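(* Let $p$ be a prime and $G$ a finite $p$-group with $|G'\cap Z(G)|=p$ and $|G'|=p^2$. Then $Z(G)^*\cap Z(C_G(G'))=G'Z(G)$.
   Context: $G'$ is the commutator subgroup, $Z(\cdot)$ the center, $C_G(G')$ the centralizer of $G'$ in $G$. Commutators are $[x,y]=xyx^{-1}y^{-1}$; for $x\in G$, $[G,x]=\{[y,x]: y\in G\}$; and $Z(G)^*=\{x\in G : [G,x]\subseteq Z(G)\}$. *)

theory Defs
  imports "HOL-Algebra.Algebra"
begin

text \<open>Commutator [x,y] = x y x^-1 y^-1 (same convention as HOL-Algebra's derived_set).\<close>
definition commutator :: "('a, 'b) monoid_scheme \<Rightarrow> 'a \<Rightarrow> 'a \<Rightarrow> 'a" where
  "commutator G x y = x \<otimes>\<^bsub>G\<^esub> y \<otimes>\<^bsub>G\<^esub> inv\<^bsub>G\<^esub> x \<otimes>\<^bsub>G\<^esub> inv\<^bsub>G\<^esub> y"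

abbreviation commutator_subgroup :: "('a, 'b) monoid_scheme \<Rightarrow> 'a set" where
  "commutator_subgroup G \<equiv> derived G (carrier G)"

definition center_of :: "('a, 'b) monoid_scheme \<Rightarrow> 'a set \<Rightarrow> 'a set" where
  "center_of G H = {x \<in> H. \<forall>y \<in> H. x \<otimes>\<^bsub>G\<^esub> y = y \<otimes>\<^bsub>G\<^esub> x}"

abbreviation center :: "('a, 'b) monoid_scheme \<Rightarrow> 'a set" where
  "center G \<equiv> center_of G (carrier G)"

definition centralizer :: "('a, 'b) monoid_scheme \<Rightarrow> 'a set \<Rightarrow> 'a set" where
  "centralizer G S = {x \<in> carrier G. \<forall>y \<in> S. x \<otimes>\<^bsub>G\<^esub> y = y \<otimes>\<^bsub>G\<^esub> x}"

definition comm_set :: "('a, 'b) monoid_scheme \<Rightarrow> 'a \<Rightarrow> 'a set" where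
  "comm_set G x = {commutator G y x | y. y \<in> carrier G}"

definition center_star :: "('a, 'b) monoid_scheme \<Rightarrow> 'a set" where
  "center_star G = {x \<in> carrier G. comm_set G x \<subseteq> center G}"

definition p_group :: "nat \<Rightarrow> ('a, 'b) monoid_scheme \<Rightarrow> bool" where
  "p_group p G \<longleftrightarrow> group G \<and> finite (carrier G) \<and> (\<exists>n. order G = p ^ n)"

end

theory Submission
  imports Defs "HOL-Number_Theory.Residues"
begin

(*
  Fix a in G' outside Z(G) and let N = G' \<inter> Z(G). Counting cosets gives G' = <a>N with a^p in N,
  so conjugation by y acts on G'/N, cyclic of order p, as a |-> a^s; since y^(p^n) = 1 we get
  s^(p^n) = 1 (mod p), hence s = 1 (mod p) by Fermat, i.e. [G,G'] \<subseteq> N.  Consequently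
  y |-> [y,a] is a homomorphism of G onto N whose kernel C_G(a) is C_G(G').  For x in
  Z(G)^* \<inter> Z(C_G(G')), the map y |-> [y,x] is another homomorphism into N, trivial on that kernel,
  so it equals y |-> [y,a]^k = [y,a^k] for some k; thus a^-k x is central and x lies in G'Z(G).
  The reverse inclusion is a direct computation using [G,G'] \<subseteq> N.
*)

lemma pow_prime_cong_self:
  fixes s p :: nat
  assumes "Factorial_Ring.prime p"
  shows "[s ^ p = s] (mod p)"
proof (cases "p dvd s")
  case True
  moreover have "s dvd s ^ p"
    using assms prime_gt_0_nat by (simp add: dvd_power)
  ultimately have "[s ^ p = 0] (mod p)" "[s = 0] (mod p)"
    by (auto simp: cong_0_iff intro: dvd_trans)
  then show ?thesis by (metis cong_sym cong_trans)
next
  case False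
  then have "[s ^ (p - 1) * s = 1 * s] (mod p)"
    by (intro cong_scalar_right fermat_theorem assms)
  moreover have "s ^ (p - 1) * s = s ^ p"
    using assms prime_gt_0_nat by (simp flip: power_Suc2)
  ultimately show ?thesis by simp
qed

lemma pow_prime_power_cong_self:
  fixes s p :: nat
  assumes "Factorial_Ring.prime p"
  shows "[s ^ (p ^ n) = s] (mod p)"
proof (induction n)
  case (Suc n)
  have "s ^ (p ^ Suc n) = (s ^ (p ^ n)) ^ p"
    by (metis power_Suc2 power_mult)
  also have "[\<dots> = s ^ (p ^ n)] (mod p)"
    by (rule pow_prime_cong_self[OF assms])
  finally show ?case using Suc.IH by (rule cong_trans)
qed simp

lemma prime_le_dvd_prime_power:
  fixes p m :: nat
  assumes p: "Factorial_Ring.prime p" and "m dvd p ^ n" "m \<noteq> 1"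
  shows "p \<le> m"
proof -
  obtain j where j: "m = p ^ j"
    using divides_primepow_nat[OF p] assms(2) by blast
  then have "j \<noteq> 0"
    using assms(3) by auto
  then have "p ^ 1 \<le> p ^ j"
    using prime_gt_0_nat[OF p] by (intro power_increasing) (auto simp: Suc_le_eq)
  then show ?thesis
    using j by simp
qed

context group
begin

lemma center_subset: "center G \<subseteq> carrier G"
  unfolding center_of_def by blast

lemma center_commute: "z \<in> center G \<Longrightarrow> x \<in> carrier G \<Longrightarrow> z \<otimes> x = x \<otimes> z"
  unfolding center_of_def by blast

lemma inv_commute:
  assumes "x \<in> carrier G" "y \<in> carrier G" "x \<otimes> y = y \<otimes> x"
  shows "inv x \<otimes> y = y \<otimes> inv x"
proof -
  have "inv x \<otimes> y = inv x \<otimes> (y \<otimes> x) \<otimes> inv x"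
    using assms(1,2) by (simp add: m_assoc)
  also have "\<dots> = y \<otimes> inv x"
    using assms by (simp flip: assms(3) add: m_assoc[symmetric])
  finally show ?thesis .
qed

lemma commute_mult:
  assumes "x1 \<in> carrier G" "x2 \<in> carrier G" "y \<in> carrier G"
    and "x1 \<otimes> y = y \<otimes> x1" "x2 \<otimes> y = y \<otimes> x2"
  shows "x1 \<otimes> x2 \<otimes> y = y \<otimes> (x1 \<otimes> x2)"
  using assms by (simp add: m_assoc) (simp add: m_assoc[symmetric])

lemma subgroup_center: "subgroup (center G) G"
proof (rule subgroupI)
  fix z w assume z: "z \<in> center G" and w: "w \<in> center G"
  then have zw: "z \<in> carrier G" "w \<in> carrier G" using center_subset by auto
  show "inv z \<in> center G"
    unfolding center_of_def
    using zw z by (auto simp: inv_commute center_commute)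
  have "z \<otimes> w \<otimes> y = y \<otimes> (z \<otimes> w)" if y: "y \<in> carrier G" for y
    using zw y center_commute[OF z y] center_commute[OF w y] by (rule commute_mult)
  then show "z \<otimes> w \<in> center G"
    unfolding center_of_def using zw by blast
qed (use center_subset in \<open>auto simp: center_of_def\<close>)

lemma inv_mult_cancel_left [simp]: "x \<in> carrier G \<Longrightarrow> y \<in> carrier G \<Longrightarrow> inv x \<otimes> (x \<otimes> y) = y"
  by (simp add: m_assoc[symmetric])

lemma mult_inv_cancel_left [simp]: "x \<in> carrier G \<Longrightarrow> y \<in> carrier G \<Longrightarrow> x \<otimes> (inv x \<otimes> y) = y"
  by (simp add: m_assoc[symmetric])

lemma commutator_closed [simp]:
  "x \<in> carrier G \<Longrightarrow> y \<in> carrier G \<Longrightarrow> commutator G x y \<in> carrier G"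
  unfolding commutator_def by simp

lemma commutator_in_derived:
  "x \<in> carrier G \<Longrightarrow> y \<in> carrier G \<Longrightarrow> commutator G x y \<in> derived G (carrier G)"
  unfolding commutator_def derived_def by (rule generate.incl) blast

lemma conj_eq_commutator_mult:
  "x \<in> carrier G \<Longrightarrow> y \<in> carrier G \<Longrightarrow> x \<otimes> y \<otimes> inv x = commutator G x y \<otimes> y"
  unfolding commutator_def by (simp add: m_assoc)

lemma commutator_eq_one_iff:
  assumes "x \<in> carrier G" "y \<in> carrier G"
  shows "commutator G x y = \<one> \<longleftrightarrow> x \<otimes> y = y \<otimes> x"
proof -
  have "commutator G x y = \<one> \<longleftrightarrow> commutator G x y \<otimes> (y \<otimes> x) = y \<otimes> x"
    using assms by simp
  also have "commutator G x y \<otimes> (y \<otimes> x) = x \<otimes> y"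
    using assms unfolding commutator_def by (simp add: m_assoc)
  finally show ?thesis .
qed

lemma commutator_center_right:
  "x \<in> carrier G \<Longrightarrow> z \<in> center G \<Longrightarrow> commutator G x z = \<one>"
  using center_subset by (auto simp: commutator_eq_one_iff center_commute)

lemma commutator_mult_left:
  assumes x: "x1 \<in> carrier G" "x2 \<in> carrier G" and y: "y \<in> carrier G"
    and central: "commutator G x2 y \<in> center G"
  shows "commutator G (x1 \<otimes> x2) y = commutator G x1 y \<otimes> commutator G x2 y"
proof -
  define c where "c = commutator G x2 y"
  have c: "c \<in> carrier G" "c \<in> center G"
    unfolding c_def using x y central by simp_all
  have "commutator G (x1 \<otimes> x2) y = x1 \<otimes> (x2 \<otimes> y \<otimes> inv x2) \<otimes> inv x1 \<otimes> inv y"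
    unfolding commutator_def using x y by (simp add: m_assoc inv_mult_group)
  also have "\<dots> = x1 \<otimes> (c \<otimes> y) \<otimes> inv x1 \<otimes> inv y"
    unfolding c_def using x y by (simp add: conj_eq_commutator_mult)
  also have "\<dots> = c \<otimes> commutator G x1 y"
    unfolding commutator_def using x y c(1) center_commute[OF c(2) x(1)]
    by (simp add: m_assoc[symmetric])
  also have "\<dots> = commutator G x1 y \<otimes> c"
    using x y by (simp add: center_commute[OF c(2)])
  finally show ?thesis unfolding c_def .
qed

lemma commutator_mult_right:
  assumes x: "x \<in> carrier G" and y: "y1 \<in> carrier G" "y2 \<in> carrier G"
    and central: "commutator G x y2 \<in> center G"
  shows "commutator G x (y1 \<otimes> y2) = commutator G x y1 \<otimes> commutator G x y2"
proof -
  define c where "c = commutator G x y2"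
  have c: "c \<in> carrier G" "c \<in> center G"
    unfolding c_def using x y central by simp_all
  have "commutator G x (y1 \<otimes> y2) = (x \<otimes> y1 \<otimes> inv x) \<otimes> (x \<otimes> y2 \<otimes> inv x) \<otimes> inv y2 \<otimes> inv y1"
    unfolding commutator_def using x y by (simp add: m_assoc inv_mult_group)
  also have "\<dots> = (x \<otimes> y1 \<otimes> inv x) \<otimes> (c \<otimes> y2) \<otimes> inv y2 \<otimes> inv y1"
    unfolding c_def using x y by (simp add: conj_eq_commutator_mult)
  also have "\<dots> = (x \<otimes> y1 \<otimes> inv x) \<otimes> c \<otimes> inv y1"
    using x y c(1) by (simp add: m_assoc)
  also have "\<dots> = c \<otimes> commutator G x y1"
    unfolding commutator_def using x y c(1) center_commute[OF c(2), of "x \<otimes> y1 \<otimes> inv x"]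
    by (simp add: m_assoc[symmetric])
  also have "\<dots> = commutator G x y1 \<otimes> c"
    using x y by (simp add: center_commute[OF c(2)])
  finally show ?thesis unfolding c_def .
qed

lemma commutator_pow_left:
  assumes "x \<in> carrier G" "y \<in> carrier G" "commutator G x y \<in> center G"
  shows "commutator G (x [^] (k::nat)) y = commutator G x y [^] k"
proof (induction k)
  case (Suc k)
  then show ?case
    using assms by (simp add: commutator_mult_left)
qed (use assms in \<open>simp add: commutator_def m_assoc\<close>)

lemma commutator_pow_right:
  assumes "x \<in> carrier G" "y \<in> carrier G" "commutator G x y \<in> center G"
  shows "commutator G x (y [^] (k::nat)) = commutator G x y [^] k"
proof (induction k)
  case (Suc k)
  then show ?case
    using assms by (simp add: commutator_mult_right)
qed (use assms in \<open>simp add: commutator_def m_assoc\<close>)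

lemma commutator_inv_right:
  assumes x: "x \<in> carrier G" and y: "y \<in> carrier G" and central: "commutator G x y \<in> center G"
  shows "commutator G x (inv y) = inv (commutator G x y)"
proof -
  have "commutator G x (inv y) \<otimes> commutator G x y = commutator G x (inv y \<otimes> y)"
    using x y central by (simp only: commutator_mult_right inv_closed)
  also have "\<dots> = \<one>"
    using x y by (simp add: commutator_def)
  finally show ?thesis
    using x y by (simp add: inv_equality)
qed

lemma subgroup_nat_pow_closed: "subgroup H G \<Longrightarrow> h \<in> H \<Longrightarrow> h [^] (k::nat) \<in> H"
  using subgroup_int_pow_closed[of H h "int k"] by (simp add: int_pow_int)

lemma conj_mult:
  "g \<in> carrier G \<Longrightarrow> x \<in> carrier G \<Longrightarrow> y \<in> carrier G \<Longrightarrow>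
    g \<otimes> (x \<otimes> y) \<otimes> inv g = (g \<otimes> x \<otimes> inv g) \<otimes> (g \<otimes> y \<otimes> inv g)"
  by (simp add: m_assoc)

lemma conj_nat_pow:
  assumes "g \<in> carrier G" "x \<in> carrier G"
  shows "g \<otimes> x [^] (k::nat) \<otimes> inv g = (g \<otimes> x \<otimes> inv g) [^] k"
proof (induction k)
  case (Suc k)
  then show ?case
    using assms conj_mult[of g "x [^] k" x] by simp
qed (use assms in simp)

lemma conj_center:
  assumes "z \<in> center G" "g \<in> carrier G"
  shows "g \<otimes> z \<otimes> inv g = z"
proof -
  have "g \<otimes> z \<otimes> inv g = z \<otimes> g \<otimes> inv g"
    using center_commute[OF assms] by simp
  then show ?thesis
    using assms center_subset by (auto simp: m_assoc)
qed

lemma conj_pow_mod_central_subgroup: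
  fixes s :: nat
  assumes H: "subgroup H G" "H \<subseteq> center G"
    and g: "g \<in> carrier G" and a: "a \<in> carrier G"
    and z: "z \<in> H" and conj: "g \<otimes> a \<otimes> inv g = a [^] s \<otimes> z"
  shows "\<exists>w\<in>H. g [^] (k::nat) \<otimes> a \<otimes> inv (g [^] k) = a [^] (s ^ k) \<otimes> w"
proof (induction k)
  case 0
  show ?case using a subgroup.one_closed[OF H(1)] by (intro bexI[of _ \<one>]) (auto simp: nat_pow_eone)
next
  case (Suc k)
  then obtain w where w: "w \<in> H" and IH: "g [^] k \<otimes> a \<otimes> inv (g [^] k) = a [^] (s ^ k) \<otimes> w"
    by blast
  have zw: "z \<in> center G" "w \<in> center G" "z \<in> carrier G" "w \<in> carrier G"
    using z w H center_subset by auto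
  have "g [^] Suc k \<otimes> a \<otimes> inv (g [^] Suc k) = g \<otimes> (g [^] k \<otimes> a \<otimes> inv (g [^] k)) \<otimes> inv g"
    unfolding nat_pow_Suc2[OF g] using g a by (simp add: inv_mult_group m_assoc)
  also have "\<dots> = (g \<otimes> a \<otimes> inv g) [^] (s ^ k) \<otimes> w"
    using g a zw by (simp add: IH conj_mult conj_nat_pow conj_center)
  also have "\<dots> = a [^] (s ^ Suc k) \<otimes> (z [^] (s ^ k) \<otimes> w)"
    using a zw center_commute[of z "a [^] s"]
    by (simp add: conj pow_mult_distrib nat_pow_pow m_assoc)
  finally show ?case
    using subgroup.m_closed[OF H(1) subgroup_nat_pow_closed[OF H(1) z] w] by blast
qed

lemma pow_mem_subgroup_iff_dvd:
  assumes H: "subgroup H G" and a: "a \<in> carrier G"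
    and m: "0 < m" "a [^] m \<in> H" and minimal: "\<And>k. 0 < k \<Longrightarrow> k < m \<Longrightarrow> a [^] k \<notin> H"
  shows "a [^] (i::nat) \<in> H \<longleftrightarrow> m dvd i"
proof
  assume "m dvd i"
  then obtain q where "i = m * q" by blast
  then show "a [^] i \<in> H"
    using subgroup_nat_pow_closed[OF H m(2), of q] a by (simp add: nat_pow_pow)
next
  assume ai: "a [^] i \<in> H"
  have "a [^] i = a [^] (m * (i div m)) \<otimes> a [^] (i mod m)"
    using a by (simp add: nat_pow_mult)
  then have "a [^] (i mod m) = inv (a [^] (m * (i div m))) \<otimes> a [^] i"
    using a by simp
  moreover have "a [^] (m * (i div m)) \<in> H"
    using subgroup_nat_pow_closed[OF H m(2)] a by (simp add: nat_pow_pow[symmetric])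
  ultimately have "a [^] (i mod m) \<in> H"
    using ai H by (simp add: subgroup.m_closed subgroup.m_inv_closed)
  then have "i mod m = 0"
    using minimal m(1) by (meson mod_less_divisor neq0_conv)
  then show "m dvd i" by (rule mod_0_imp_dvd)
qed

lemma inj_on_pow_mult_subgroup:
  assumes H: "subgroup H G" and a: "a \<in> carrier G"
    and m: "0 < m" "a [^] m \<in> H" and minimal: "\<And>k. 0 < k \<Longrightarrow> k < m \<Longrightarrow> a [^] k \<notin> H"
  shows "inj_on (\<lambda>(i::nat, h). a [^] i \<otimes> h) ({..<m} \<times> H)"
proof -
  have same: "i = j \<and> h = h'"
    if ij: "i \<le> j" "j < m" and h: "h \<in> H" "h' \<in> H" and eq: "a [^] i \<otimes> h = a [^] j \<otimes> h'"
    for i j :: nat and h h'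
  proof -
    have hc: "h \<in> carrier G" "h' \<in> carrier G"
      using h subgroup.subset[OF H] by auto
    have aj: "a [^] j = a [^] i \<otimes> a [^] (j - i)"
      using ij by (simp add: nat_pow_mult[OF a])
    have "a [^] i \<otimes> h = a [^] i \<otimes> (a [^] (j - i) \<otimes> h')"
      by (simp only: eq aj m_assoc[OF nat_pow_closed[OF a] nat_pow_closed[OF a] hc(2)])
    then have h_eq: "h = a [^] (j - i) \<otimes> h'"
      using a hc by simp
    have "a [^] (j - i) = h \<otimes> inv h'"
      unfolding h_eq using a hc by (simp add: m_assoc)
    then have "a [^] (j - i) \<in> H"
      using subgroup.m_closed[OF H h(1) subgroup.m_inv_closed[OF H h(2)]] by simp
    then have "m dvd j - i"
      using pow_mem_subgroup_iff_dvd[OF H a m minimal] by simp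
    moreover have "j - i < m"
      using ij by simp
    ultimately have "j - i = 0"
      by (meson nat_dvd_not_less neq0_conv)
    then have "i = j"
      using ij by simp
    then show ?thesis
      using h_eq a hc by simp
  qed
  show ?thesis
  proof (rule inj_onI)
    fix x y
    assume x: "x \<in> {..<m} \<times> H" and y: "y \<in> {..<m} \<times> H"
      and eq: "(\<lambda>(i::nat, h). a [^] i \<otimes> h) x = (\<lambda>(i::nat, h). a [^] i \<otimes> h) y"
    obtain i h j h' where xy: "x = (i, h)" "y = (j, h')"
      by (cases x, cases y)
    have "i < m" "h \<in> H" "j < m" "h' \<in> H" "a [^] i \<otimes> h = a [^] j \<otimes> h'"
      using x y eq unfolding xy by auto
    then have "i = j \<and> h = h'"
      using same[of i j h h'] same[of j i h' h] by (cases "i \<le> j") auto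
    then show "x = y"
      unfolding xy by simp
  qed
qed

lemma pow_generates_subgroup_of_prime_card:
  assumes p: "Factorial_Ring.prime p" and order: "order G = p ^ n"
    and H: "subgroup H G" "card H = p"
    and c: "c \<in> H" "c \<noteq> \<one>" and h: "h \<in> H"
  shows "\<exists>k::nat. h = c [^] k"
proof -
  have c_carrier: "c \<in> carrier G"
    using c H subgroup.subset by blast
  have p_le_ord: "p \<le> ord c"
    using prime_le_dvd_prime_power[OF p] ord_dvd_group_order[OF c_carrier] order
      ord_eq_1[OF c_carrier] c(2) by metis
  let ?P = "(\<lambda>k. c [^] k) ` {0 .. ord c - 1}"
  have "card ?P = ord c"
    using card_image[OF ord_inj[OF c_carrier]] p_le_ord prime_gt_1_nat[OF p] by simp
  moreover have "?P \<subseteq> H"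
    using subgroup_nat_pow_closed[OF H(1) c(1)] by blast
  moreover have "finite H"
    using H(2) prime_gt_0_nat[OF p] card_gt_0_iff by metis
  ultimately have "?P = H"
    using H(2) p_le_ord by (intro card_seteq) auto
  then show ?thesis
    using h by auto
qed

end

locale derived_of_order_p_squared = group G for G (structure) +
  fixes p n :: nat
  assumes prime_p: "Factorial_Ring.prime p"
    and order_G: "order G = p ^ n"
    and card_derived_inter_center: "card (derived G (carrier G) \<inter> center G) = p"
    and card_derived: "card (derived G (carrier G)) = p ^ 2"
begin

abbreviation "D \<equiv> derived G (carrier G)"

abbreviation "N \<equiv> D \<inter> center G"

lemma subgroup_D: "subgroup D G"
  by (simp add: derived_is_subgroup)

lemma subgroup_N: "subgroup N G"
  by (simp add: subgroups_Inter_pair subgroup_D subgroup_center)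

lemma finite_D: "finite D"
  using card_derived prime_gt_0_nat[OF prime_p] card.infinite by fastforce

lemma exists_noncentral_derived: "\<exists>a \<in> D. a \<notin> center G"
proof (rule ccontr)
  assume "\<not> ?thesis"
  then have "p ^ 2 = p"
    using card_derived card_derived_inter_center by (metis Int_absorb2 subsetI)
  then show False
    using prime_gt_1_nat[OF prime_p] by (simp add: power2_eq_square)
qed

end

locale noncentral_derived_element = derived_of_order_p_squared +
  fixes a
  assumes a_derived: "a \<in> D" and a_noncentral: "a \<notin> center G"
begin

lemma a_carrier: "a \<in> carrier G"
  using a_derived subgroup.subset[OF subgroup_D] by blast

lemma minimal_pow_a_in_N: "a [^] p \<in> N" "\<forall>k. 0 < k \<longrightarrow> k < p \<longrightarrow> a [^] k \<notin> N"
proof -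
  define m where "m = (LEAST m::nat. 0 < m \<and> a [^] m \<in> N)"
  have "0 < order G \<and> a [^] order G \<in> N"
    using order_G prime_gt_0_nat[OF prime_p] pow_order_eq_1[OF a_carrier] subgroup.one_closed[OF subgroup_N]
    by simp
  then have "0 < m \<and> a [^] m \<in> N"
    unfolding m_def by (rule LeastI)
  then have m: "0 < m" "a [^] m \<in> N"
    by auto
  have minimal: "\<And>k. 0 < k \<Longrightarrow> k < m \<Longrightarrow> a [^] k \<notin> N"
    unfolding m_def using not_less_Least by blast
  note m_props = subgroup_N a_carrier m minimal
  have "card ((\<lambda>(i, z). a [^] i \<otimes> z) ` ({..<m} \<times> N)) \<le> card D"
    using subgroup_nat_pow_closed[OF subgroup_D a_derived] subgroup.m_closed[OF subgroup_D]
    by (intro card_mono finite_D) auto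
  then have "m * p \<le> p * p"
    using card_image[OF inj_on_pow_mult_subgroup[OF m_props]] card_derived card_derived_inter_center
    by (simp add: card_cartesian_product power2_eq_square)
  then have "m \<le> p"
    using prime_gt_0_nat[OF prime_p] by simp
  moreover have "m dvd p ^ n"
    using pow_mem_subgroup_iff_dvd[OF m_props] pow_order_eq_1[OF a_carrier] order_G
      subgroup.one_closed[OF subgroup_N] by metis
  moreover have "m \<noteq> 1"
    using m(2) a_carrier a_noncentral by (auto simp: nat_pow_eone)
  ultimately have "m = p"
    using prime_le_dvd_prime_power[OF prime_p] by fastforce
  then show "a [^] p \<in> N" "\<forall>k. 0 < k \<longrightarrow> k < p \<longrightarrow> a [^] k \<notin> N"
    using m minimal by auto
qed

lemma pow_a_in_N_iff: "a [^] (i::nat) \<in> N \<longleftrightarrow> p dvd i"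
  using pow_mem_subgroup_iff_dvd[OF subgroup_N a_carrier prime_gt_0_nat[OF prime_p]]
    minimal_pow_a_in_N by blast

lemma derived_elemE:
  assumes "d \<in> D"
  obtains i :: nat and z where "z \<in> N" "d = a [^] i \<otimes> z"
proof -
  let ?f = "\<lambda>(i::nat, z). a [^] i \<otimes> z"
  have inj: "inj_on ?f ({..<p} \<times> N)"
    using inj_on_pow_mult_subgroup[OF subgroup_N a_carrier prime_gt_0_nat[OF prime_p]]
      minimal_pow_a_in_N by blast
  have "?f ` ({..<p} \<times> N) \<subseteq> D"
    using subgroup_nat_pow_closed[OF subgroup_D a_derived] subgroup.m_closed[OF subgroup_D]
    by auto
  moreover have "card (?f ` ({..<p} \<times> N)) = card D"
    using card_image[OF inj] card_derived card_derived_inter_center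
    by (simp add: card_cartesian_product power2_eq_square)
  ultimately have "?f ` ({..<p} \<times> N) = D"
    using finite_D by (intro card_subset_eq) auto
  then obtain x where "x \<in> {..<p} \<times> N" "d = ?f x"
    using assms by blast
  then show ?thesis
    using that by (cases x) auto
qed

lemma conj_a_exponent:
  fixes s :: nat
  assumes y: "y \<in> carrier G" and z: "z \<in> N" and conj: "y \<otimes> a \<otimes> inv y = a [^] s \<otimes> z"
  shows "0 < s" and "[s = 1] (mod p)"
proof -
  define T where "T = s ^ (p ^ n)"
  obtain w where w: "w \<in> N" and "y [^] (p ^ n) \<otimes> a \<otimes> inv (y [^] (p ^ n)) = a [^] T \<otimes> w"
    unfolding T_def using conj_pow_mod_central_subgroup[OF subgroup_N _ y a_carrier z conj] by blast
  then have a_eq: "a = a [^] T \<otimes> w"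
    using pow_order_eq_1[OF y] order_G y a_carrier by simp
  have w_carrier: "w \<in> carrier G"
    using w subgroup.subset[OF subgroup_N] by blast
  have "T \<noteq> 0"
  proof
    assume "T = 0"
    then have "a = w" using a_eq w_carrier by simp
    then show False using w a_noncentral by simp
  qed
  then show "0 < s"
    unfolding T_def using prime_gt_0_nat[OF prime_p] by (simp add: gr0I)
  have "a \<otimes> \<one> = a \<otimes> (a [^] (T - 1) \<otimes> w)"
    using a_eq a_carrier w_carrier \<open>T \<noteq> 0\<close> nat_pow_Suc2[OF a_carrier, of "T - 1"]
    by (simp add: m_assoc)
  then have "a [^] (T - 1) \<otimes> w = \<one>"
    using a_carrier w_carrier by simp
  then have "a [^] (T - 1) = inv w"
    using a_carrier w_carrier by (simp add: inv_equality)
  then have "a [^] (T - 1) \<in> N"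
    using w subgroup.m_inv_closed[OF subgroup_N] by simp
  then have "[T = 1] (mod p)"
    using pow_a_in_N_iff \<open>T \<noteq> 0\<close> by (simp add: cong_altdef_nat)
  moreover have "[T = s] (mod p)"
    unfolding T_def by (rule pow_prime_power_cong_self[OF prime_p])
  ultimately show "[s = 1] (mod p)"
    using cong_trans cong_sym by blast
qed

lemma commutator_a_in_N:
  assumes y: "y \<in> carrier G"
  shows "commutator G y a \<in> N"
proof -
  have "y \<otimes> a \<otimes> inv y \<in> D"
    using normal.inv_op_closed2[OF derived_self_is_normal y a_derived] .
  then obtain s :: nat and z where z: "z \<in> N" and conj: "y \<otimes> a \<otimes> inv y = a [^] s \<otimes> z"
    by (rule derived_elemE)
  define u where "u = a [^] (s - 1) \<otimes> z"
  have "p dvd s - 1"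
    using conj_a_exponent[OF y z conj] by (simp add: cong_altdef_nat)
  then have u: "u \<in> N"
    unfolding u_def using pow_a_in_N_iff z subgroup.m_closed[OF subgroup_N] by blast
  then have u_carrier: "u \<in> carrier G" "u \<in> center G"
    using subgroup.subset[OF subgroup_N] by auto
  have "commutator G y a \<otimes> a = a [^] s \<otimes> z"
    using conj y a_carrier by (simp add: conj_eq_commutator_mult)
  also have "\<dots> = a \<otimes> u"
    unfolding u_def using conj_a_exponent(1)[OF y z conj] a_carrier u_carrier z
      nat_pow_Suc2[OF a_carrier, of "s - 1"] subgroup.subset[OF subgroup_N]
    by (auto simp: m_assoc)
  also have "\<dots> = u \<otimes> a"
    using center_commute[OF u_carrier(2) a_carrier] by simp
  finally have "commutator G y a = u"
    using y a_carrier u_carrier by simp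
  then show ?thesis using u by simp
qed

lemma commutator_derived_eq_pow:
  assumes y: "y \<in> carrier G" and d: "d \<in> D"
  shows "\<exists>i::nat. commutator G y d = commutator G y a [^] i"
proof -
  obtain i :: nat and z where z: "z \<in> N" and d_eq: "d = a [^] i \<otimes> z"
    using d by (rule derived_elemE)
  have z_center: "z \<in> carrier G" "z \<in> center G"
    using z subgroup.subset[OF subgroup_N] by auto
  have ya_center: "commutator G y a \<in> center G"
    using commutator_a_in_N[OF y] by simp
  have "commutator G y d = commutator G y (a [^] i) \<otimes> commutator G y z"
    unfolding d_eq using y a_carrier z_center subgroup.one_closed[OF subgroup_center]
    by (simp add: commutator_mult_right commutator_center_right)
  also have "\<dots> = commutator G y a [^] i"
    using y a_carrier z_center by (simp add: commutator_pow_right[OF y a_carrier ya_center] commutator_center_right)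
  finally show ?thesis by blast
qed

lemma commutator_derived_in_N: "y \<in> carrier G \<Longrightarrow> d \<in> D \<Longrightarrow> commutator G y d \<in> N"
  using commutator_derived_eq_pow commutator_a_in_N subgroup_nat_pow_closed[OF subgroup_N] by metis

lemma centralizer_derived_if_commutes_a:
  assumes u: "u \<in> carrier G" and ua: "commutator G u a = \<one>"
  shows "u \<in> centralizer G D"
proof -
  have "u \<otimes> d = d \<otimes> u" if d: "d \<in> D" for d
  proof -
    obtain i :: nat where "commutator G u d = commutator G u a [^] i"
      using commutator_derived_eq_pow[OF u d] by blast
    then have "commutator G u d = \<one>"
      using ua by simp
    then show ?thesis
      using u d subgroup.subset[OF subgroup_D] by (auto simp: commutator_eq_one_iff)
  qed
  then show ?thesis
    unfolding centralizer_def using u by blast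
qed

lemma derived_subset_centralizer: "D \<subseteq> centralizer G D"
proof
  fix d assume d: "d \<in> D"
  have d_carrier: "d \<in> carrier G"
    using d subgroup.subset[OF subgroup_D] by blast
  have "a \<in> centralizer G D"
    using a_carrier by (intro centralizer_derived_if_commutes_a) (simp_all add: commutator_eq_one_iff)
  then have "commutator G d a = \<one>"
    using d d_carrier a_carrier unfolding centralizer_def by (simp add: commutator_eq_one_iff)
  then show "d \<in> centralizer G D"
    by (rule centralizer_derived_if_commutes_a[OF d_carrier])
qed

lemma derived_times_center_subset:
  "D <#> center G \<subseteq> center_star G \<inter> center_of G (centralizer G D)"
proof
  fix x assume "x \<in> D <#> center G"
  then obtain d z where d: "d \<in> D" and z: "z \<in> center G" and x_eq: "x = d \<otimes> z"
    unfolding set_mult_def by blast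
  have carrier: "d \<in> carrier G" "z \<in> carrier G" "x \<in> carrier G"
    using d z x_eq subgroup.subset[OF subgroup_D] center_subset by auto
  have "commutator G y x \<in> center G" if y: "y \<in> carrier G" for y
  proof -
    have "commutator G y x = commutator G y d"
      unfolding x_eq using y carrier z subgroup.one_closed[OF subgroup_center]
      by (simp add: commutator_mult_right commutator_center_right)
    then show ?thesis
      using commutator_derived_in_N[OF y d] by simp
  qed
  then have "x \<in> center_star G"
    unfolding center_star_def comm_set_def using carrier by blast
  moreover have "x \<otimes> c = c \<otimes> x" if c: "c \<in> centralizer G D" for c
    using c d carrier unfolding x_eq centralizer_def
    by (auto intro!: commute_mult simp: center_commute[OF z])
  moreover have "x \<in> centralizer G D"
    using derived_subset_centralizer d carrier unfolding x_eq centralizer_def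
    by (auto intro!: commute_mult simp: center_commute[OF z])
  ultimately show "x \<in> center_star G \<inter> center_of G (centralizer G D)"
    unfolding center_of_def by blast
qed

lemma commutator_pow_transfer:
  assumes x: "x \<in> center_of G (centralizer G D)" "x \<in> carrier G"
    and y: "y \<in> carrier G" "y0 \<in> carrier G" and y0x_central: "commutator G y0 x \<in> center G"
    and j: "commutator G y a = commutator G y0 a [^] (j::nat)"
  shows "commutator G y x = commutator G y0 x [^] j"
proof -
  \<comment> \<open>u centralises a, hence G', hence commutes with x: the hypothesis on x is used only here\<close>
  define u where "u = y \<otimes> inv (y0 [^] j)"
  have u: "u \<in> carrier G" "y = u \<otimes> y0 [^] j"
    unfolding u_def using y by (simp_all add: m_assoc)
  have y0a_central: "commutator G y0 a \<in> center G"
    using commutator_a_in_N[OF y(2)] by simp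
  have "commutator G y0 a [^] j = commutator G u a \<otimes> commutator G y0 a [^] j"
    using j u y a_carrier y0a_central subgroup_nat_pow_closed[OF subgroup_center]
    by (simp add: commutator_mult_left commutator_pow_left)
  then have "commutator G u a = \<one>"
    using u(1) y(2) a_carrier by simp
  then have "u \<in> centralizer G D"
    by (rule centralizer_derived_if_commutes_a[OF u(1)])
  then have "commutator G u x = \<one>"
    using x u(1) unfolding center_of_def by (auto simp: commutator_eq_one_iff)
  then show ?thesis
    using u y x y0x_central subgroup_nat_pow_closed[OF subgroup_center]
    by (simp add: commutator_mult_left commutator_pow_left)
qed

lemma commutator_eq_pow_commutator_a:
  assumes x_star: "x \<in> center_star G" and x_center: "x \<in> center_of G (centralizer G D)"
  shows "\<exists>k::nat. \<forall>y\<in>carrier G. commutator G y x = commutator G y a [^] k"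
proof -
  have x: "x \<in> carrier G"
    using x_star unfolding center_star_def by blast
  have yx_in_N: "commutator G y x \<in> N" if "y \<in> carrier G" for y
    using x_star that x commutator_in_derived unfolding center_star_def comm_set_def by blast
  obtain y0 where y0: "y0 \<in> carrier G" and "a \<otimes> y0 \<noteq> y0 \<otimes> a"
    using a_noncentral a_carrier unfolding center_of_def by blast
  define c where "c = commutator G y0 a"
  have c: "c \<in> N" "c \<noteq> \<one>"
    unfolding c_def using commutator_a_in_N[OF y0] y0 a_carrier \<open>a \<otimes> y0 \<noteq> y0 \<otimes> a\<close>
    by (auto simp: commutator_eq_one_iff)
  have c_carrier: "c \<in> carrier G"
    using c(1) center_subset by blast
  note pow_of_c = pow_generates_subgroup_of_prime_card[OF prime_p order_G subgroup_N
      card_derived_inter_center c]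
  obtain k :: nat where k: "commutator G y0 x = c [^] k"
    using pow_of_c yx_in_N[OF y0] by blast
  have "commutator G y x = commutator G y a [^] k" if y: "y \<in> carrier G" for y
  proof -
    obtain j :: nat where j: "commutator G y a = c [^] j"
      using pow_of_c commutator_a_in_N[OF y] by blast
    have "commutator G y x = commutator G y0 x [^] j"
      using commutator_pow_transfer[OF x_center x y y0 _ j[unfolded c_def]] yx_in_N[OF y0] by simp
    then show ?thesis
      using j k c_carrier by (simp add: nat_pow_pow mult.commute)
  qed
  then show ?thesis by blast
qed

lemma center_star_inter_subset:
  "center_star G \<inter> center_of G (centralizer G D) \<subseteq> D <#> center G"
proof
  fix x assume x: "x \<in> center_star G \<inter> center_of G (centralizer G D)"
  then have x_carrier: "x \<in> carrier G"
    unfolding center_star_def by blast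
  obtain k :: nat where k: "\<forall>y\<in>carrier G. commutator G y x = commutator G y a [^] k"
    using commutator_eq_pow_commutator_a x by blast
  define w where "w = inv (a [^] k) \<otimes> x"
  have w_carrier: "w \<in> carrier G"
    unfolding w_def using a_carrier x_carrier by simp
  have "commutator G y w = \<one>" if y: "y \<in> carrier G" for y
  proof -
    have ya: "commutator G y a \<in> center G"
      using commutator_a_in_N[OF y] by simp
    have yak: "commutator G y (a [^] k) = commutator G y a [^] k"
      by (rule commutator_pow_right[OF y a_carrier ya])
    have "commutator G y w = inv (commutator G y (a [^] k)) \<otimes> commutator G y x"
      unfolding w_def using y a_carrier x_carrier x ya yak k[rule_format, OF y]
        subgroup_nat_pow_closed[OF subgroup_center]
      by (simp add: commutator_mult_right commutator_inv_right)
    then show ?thesis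
      using y a_carrier by (simp add: yak k[rule_format, OF y])
  qed
  then have "w \<in> center G"
    using w_carrier unfolding center_of_def by (auto simp: commutator_eq_one_iff)
  moreover have "x = a [^] k \<otimes> w"
    unfolding w_def using a_carrier x_carrier by simp
  moreover have "a [^] k \<in> D"
    using subgroup_nat_pow_closed[OF subgroup_D a_derived] .
  ultimately show "x \<in> D <#> center G"
    unfolding set_mult_def by blast
qed

end

theorem lemma3p4:
  fixes G :: "('a, 'b) monoid_scheme" and p :: nat
  assumes "Factorial_Ring.prime p"
    and "p_group p G"
    and "card (commutator_subgroup G \<inter> center G) = p"
    and "card (commutator_subgroup G) = p ^ 2"
  shows "center_star G \<inter> center_of G (centralizer G (commutator_subgroup G))
           = commutator_subgroup G <#>\<^bsub>G\<^esub> center G"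
proof -
  obtain n where "group G" "order G = p ^ n"
    using assms(2) unfolding p_group_def by blast
  then interpret derived_of_order_p_squared G p n
    using assms(1,3,4)
    by (simp add: derived_of_order_p_squared_def derived_of_order_p_squared_axioms_def)
  obtain a where "a \<in> D" "a \<notin> center G"
    using exists_noncentral_derived by blast
  then interpret noncentral_derived_element G p n a
    by (simp add: noncentral_derived_element_def noncentral_derived_element_axioms_def
        derived_of_order_p_squared_axioms)
  show ?thesis
    using derived_times_center_subset center_star_inter_subset by blast
qed

end
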